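(* Let $(\mathbb{T},G)$ be a minimal equicontinuous topological dynamical system with $\mathbb{T}$ infinite, and let $\theta,\theta'\in\mathbb{T}$. Then every neighbourhood of the neutral element $e$ of $E(\mathbb{T})$ contains some $g\in G$ (regarded as an element of $E(\mathbb{T})$) with $g\theta\neq\theta$ and $g\theta'\neq\theta'$.
   Context: A topological dynamical system $(X,G)$ consists of a topological group $G$ acting jointly continuously on the left on a compact Hausdorff space $X$; we write $gx$ for the action. It is minimal if every orbit $Gx$ is dense in $X$, and equicontinuous if the family of maps $\{x\mapsto gx: g\in G\}$ is equicontinuous with respect to the unique uniformity of $X$. The Ellis semigroup $E(X)$ is the closure of $\{x\mapsto gx:g\in G\}$ in $X^X$ with the topology of pointwise convergence; elements of $G$ are regarded as elements of $E(X)$. For $(\mathbb{T},G)$ minimal and equicontinuous it is known that $E(\mathbb{T})$ is a compact Hausdorff topological group consisting of homeomorphisms of $\mathbb{T}$, acting jointly continuously and transitively on $\mathbb{T}$ and extending the action of $G$. *)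

theory Defs
  imports "HOL-Analysis.Analysis" "HOL-Algebra.Group"
begin

definition topological_group :: "('g, 'm) monoid_scheme \<Rightarrow> 'g topology \<Rightarrow> bool" where
  "topological_group G T \<longleftrightarrow> group G \<and> topspace T = carrier G \<and>
     continuous_map (prod_topology T T) T (\<lambda>(a, b). a \<otimes>\<^bsub>G\<^esub> b) \<and>
     continuous_map T T (\<lambda>a. inv\<^bsub>G\<^esub> a)"

definition tds :: "('g, 'm) monoid_scheme \<Rightarrow> 'g topology \<Rightarrow> 'a topology \<Rightarrow> ('g \<Rightarrow> 'a \<Rightarrow> 'a) \<Rightarrow> bool" where
  "tds G T X act \<longleftrightarrow> topological_group G T \<and> compact_space X \<and> Hausdorff_space X \<and>
     (\<forall>g\<in>carrier G. \<forall>x\<in>topspace X. act g x \<in> topspace X) \<and>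
     (\<forall>x\<in>topspace X. act \<one>\<^bsub>G\<^esub> x = x) \<and>
     (\<forall>g\<in>carrier G. \<forall>h\<in>carrier G. \<forall>x\<in>topspace X. act (g \<otimes>\<^bsub>G\<^esub> h) x = act g (act h x)) \<and>
     continuous_map (prod_topology T X) X (\<lambda>(g, x). act g x)"

definition minimal_action :: "('g, 'm) monoid_scheme \<Rightarrow> 'a topology \<Rightarrow> ('g \<Rightarrow> 'a \<Rightarrow> 'a) \<Rightarrow> bool" where
  "minimal_action G X act \<longleftrightarrow>
     (\<forall>x\<in>topspace X. X closure_of ((\<lambda>g. act g x) ` carrier G) = topspace X)"

text \<open>Equicontinuity of the family of maps with respect to the unique uniformity of the
compact Hausdorff space X, whose entourages are exactly the neighbourhoods of the diagonal
in X \<times> X (it suffices to test open neighbourhoods of the diagonal).\<close>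
definition equicontinuous_action :: "('g, 'm) monoid_scheme \<Rightarrow> 'a topology \<Rightarrow> ('g \<Rightarrow> 'a \<Rightarrow> 'a) \<Rightarrow> bool" where
  "equicontinuous_action G X act \<longleftrightarrow>
     (\<forall>x\<in>topspace X. \<forall>W. openin (prod_topology X X) W \<and>
         (\<forall>z\<in>topspace X. (z, z) \<in> W) \<longrightarrow>
       (\<exists>U. openin X U \<and> x \<in> U \<and>
          (\<forall>y\<in>U. \<forall>g\<in>carrier G. (act g x, act g y) \<in> W)))"

text \<open>The topology of pointwise convergence on X^X (maps are represented extensionally,
i.e. restricted to topspace X).\<close>
definition pointwise_top :: "'a topology \<Rightarrow> ('a \<Rightarrow> 'a) topology" where
  "pointwise_top X = product_topology (\<lambda>_. X) (topspace X)"

definition act_map :: "('g \<Rightarrow> 'a \<Rightarrow> 'a) \<Rightarrow> 'a topology \<Rightarrow> 'g \<Rightarrow> ('a \<Rightarrow> 'a)" where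
  "act_map act X g = restrict (act g) (topspace X)"

definition ellis_semigroup :: "('g, 'm) monoid_scheme \<Rightarrow> 'a topology \<Rightarrow> ('g \<Rightarrow> 'a \<Rightarrow> 'a) \<Rightarrow> ('a \<Rightarrow> 'a) set" where
  "ellis_semigroup G X act = (pointwise_top X) closure_of (act_map act X ` carrier G)"

definition ellis_top :: "('g, 'm) monoid_scheme \<Rightarrow> 'a topology \<Rightarrow> ('g \<Rightarrow> 'a \<Rightarrow> 'a) \<Rightarrow> ('a \<Rightarrow> 'a) topology" where
  "ellis_top G X act = subtopology (pointwise_top X) (ellis_semigroup G X act)"

definition ellis_unit :: "'a topology \<Rightarrow> ('a \<Rightarrow> 'a)" where
  "ellis_unit X = restrict id (topspace X)"

definition neighbourhood_in :: "'b topology \<Rightarrow> 'b set \<Rightarrow> 'b \<Rightarrow> bool" where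
  "neighbourhood_in S N p \<longleftrightarrow> N \<subseteq> topspace S \<and> (\<exists>U. openin S U \<and> p \<in> U \<and> U \<subseteq> N)"

end

(*
  Neighbourhoods of the unit in E(T) contain the sets of g moving finitely many points p_i
  into prescribed open V_i. Suppose every such g fixed \<theta>. Equicontinuity makes these
  "pinning" conditions stable under small perturbation, so h \<theta> is determined by the
  positions of the h p_i up to a fixed entourage; covering T by finitely many small balls
  leaves only finitely many possibilities, so the orbit of \<theta> is finite, hence closed,
  hence all of the infinite space T by minimality, a contradiction. Applying this once to
  \<theta> and then, with g \<theta> pinned away from \<theta>, to \<theta>' moves both points.
*)
theory Submission
  imports Defs
begin

text \<open>For a compact Hausdorff space these are exactly the open entourages of its unique uniformity.\<close>
definition diagonal_nbhd :: "'a topology \<Rightarrow> ('a \<times> 'a) set \<Rightarrow> bool" where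
  "diagonal_nbhd X W \<longleftrightarrow> openin (prod_topology X X) W \<and> (\<forall>z\<in>topspace X. (z, z) \<in> W)"

lemma diagonal_nbhd_Inter:
  assumes "finite I" "\<And>i. i \<in> I \<Longrightarrow> diagonal_nbhd X (W i)"
  shows "diagonal_nbhd X (\<Inter>(insert (topspace X \<times> topspace X) (W ` I)))"
proof -
  have "openin (prod_topology X X) (topspace X \<times> topspace X)"
    by (metis openin_topspace topspace_prod_topology)
  then show ?thesis
    using assms unfolding diagonal_nbhd_def by (intro conjI openin_Inter) auto
qed

lemma diagonal_nbhd_square_union:
  assumes "openin X A" "closedin X K" "K \<subseteq> A"
  shows "diagonal_nbhd X (A \<times> A \<union> (topspace X - K) \<times> (topspace X - K))"
proof -
  have "openin X (topspace X - K)"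
    using assms(2) by blast
  then show ?thesis
    using assms unfolding diagonal_nbhd_def by (auto simp: openin_prod_Times_iff intro!: openin_Un)
qed

lemma compact_space_finite_subcover_points:
  assumes "compact_space X" "\<And>z. z \<in> topspace X \<Longrightarrow> openin X (B z) \<and> z \<in> B z"
  obtains Z where "finite Z" "Z \<subseteq> topspace X" "topspace X \<subseteq> \<Union>(B ` Z)"
proof -
  have "\<forall>U\<in>B ` topspace X. openin X U" "topspace X \<subseteq> \<Union>(B ` topspace X)"
    using assms(2) by auto
  then obtain \<F> where \<F>: "finite \<F>" "\<F> \<subseteq> B ` topspace X" "topspace X \<subseteq> \<Union>\<F>"
    using assms(1) unfolding compact_space_alt by meson
  then obtain Z where "Z \<subseteq> topspace X" "finite Z" "\<F> = B ` Z"
    by (meson finite_subset_image)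
  then show thesis
    using \<F>(3) that by blast
qed

lemma openin_prod_topology_section:
  assumes "openin (prod_topology X Y) R"
  shows "openin Y {b. (a, b) \<in> R}"
proof (subst openin_subopen, intro ballI)
  fix b assume "b \<in> {b. (a, b) \<in> R}"
  then have "(a, b) \<in> R"
    by simp
  then obtain U V where UV: "openin Y V" "a \<in> U" "b \<in> V" "U \<times> V \<subseteq> R"
    using assms unfolding openin_prod_topology_alt by meson
  then have "V \<subseteq> {b. (a, b) \<in> R}"
    by blast
  then show "\<exists>T. openin Y T \<and> b \<in> T \<and> T \<subseteq> {b. (a, b) \<in> R}"
    using UV by blast
qed

lemma diagonal_nbhd_finite_net:
  assumes "compact_space X" "diagonal_nbhd X R"
  obtains C where "finite C" "C \<subseteq> topspace X" "\<And>y. y \<in> topspace X \<Longrightarrow> \<exists>c\<in>C. (c, y) \<in> R"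
proof -
  have "openin X {b. (a, b) \<in> R} \<and> a \<in> {b. (a, b) \<in> R}" if a: "a \<in> topspace X" for a
    using assms(2) a openin_prod_topology_section[of X X R a] unfolding diagonal_nbhd_def by simp
  then obtain C where C: "finite C" "C \<subseteq> topspace X" "topspace X \<subseteq> (\<Union>a\<in>C. {b. (a, b) \<in> R})"
    using compact_space_finite_subcover_points[OF assms(1), of "\<lambda>a. {b. (a, b) \<in> R}"] by blast
  show thesis
  proof (rule that[OF C(1,2)])
    show "\<exists>c\<in>C. (c, y) \<in> R" if y: "y \<in> topspace X" for y
      using C(3) y by blast
  qed
qed

lemma diagonal_nbhd_star_refinement:
  assumes "compact_space X" "Hausdorff_space X" "diagonal_nbhd X W0"
  obtains W where "diagonal_nbhd X W" "\<And>a b c. (a, b) \<in> W \<Longrightarrow> (a, c) \<in> W \<Longrightarrow> (b, c) \<in> W0"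
proof -
  have "\<exists>A. openin X A \<and> z \<in> A \<and> A \<times> A \<subseteq> W0" if z: "z \<in> topspace X" for z
  proof -
    obtain U V where "openin X U" "openin X V" "z \<in> U" "z \<in> V" "U \<times> V \<subseteq> W0"
      using assms(3) z unfolding diagonal_nbhd_def openin_prod_topology_alt by meson
    then show ?thesis
      by (intro exI[of _ "U \<inter> V"]) auto
  qed
  then obtain A where A: "\<And>z. z \<in> topspace X \<Longrightarrow> openin X (A z) \<and> z \<in> A z \<and> A z \<times> A z \<subseteq> W0"
    by metis
  have "\<exists>B. openin X B \<and> z \<in> B \<and> X closure_of B \<subseteq> A z" if z: "z \<in> topspace X" for z
  proof -
    have "regular_space X"
      using assms(1,2) compact_Hausdorff_imp_regular_space by blast
    moreover have "closedin X (topspace X - A z)" "z \<in> topspace X - (topspace X - A z)"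
      using A[OF z] z by auto
    ultimately obtain U where "openin X U" "z \<in> U" "disjnt (topspace X - A z) (X closure_of U)"
      unfolding regular_space by blast
    then show ?thesis
      using closure_of_subset_topspace[of X U] by (intro exI[of _ U]) (auto simp: disjnt_iff)
  qed
  then obtain B where B: "\<And>z. z \<in> topspace X \<Longrightarrow> openin X (B z) \<and> z \<in> B z \<and> X closure_of B z \<subseteq> A z"
    by metis
  obtain Z where Z: "finite Z" "Z \<subseteq> topspace X" "topspace X \<subseteq> \<Union>(B ` Z)"
    using compact_space_finite_subcover_points[OF assms(1)] B by metis
  txt \<open>A pair in every \<open>P z\<close> whose first point lies in \<open>B z\<close> has both points in \<open>A z\<close>.\<close>
  define P where "P z = A z \<times> A z \<union> (topspace X - X closure_of B z) \<times> (topspace X - X closure_of B z)" for z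
  define W where "W = \<Inter>(insert (topspace X \<times> topspace X) (P ` Z))"
  have "diagonal_nbhd X (P z)" if "z \<in> Z" for z
    unfolding P_def using A[of z] B[of z] Z(2) that by (intro diagonal_nbhd_square_union) auto
  then have "diagonal_nbhd X W"
    unfolding W_def by (rule diagonal_nbhd_Inter[OF Z(1)])
  moreover have "(b, c) \<in> W0" if ab: "(a, b) \<in> W" and ac: "(a, c) \<in> W" for a b c
  proof -
    obtain z where z: "z \<in> Z" "a \<in> B z"
      using ab Z unfolding W_def by blast
    then have "a \<in> X closure_of B z"
      using B[of z] Z(2) closure_of_subset[OF openin_subset] by blast
    then have "b \<in> A z" "c \<in> A z"
      using ab ac z unfolding W_def P_def by auto
    then show ?thesis
      using A Z(2) z(1) by blast
  qed
  ultimately show thesis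
    using that by blast
qed

lemma diagonal_nbhd_pinning:
  assumes "t1_space X" "finite I"
    and "\<And>i. i \<in> I \<Longrightarrow> p i \<in> topspace X \<and> openin X (V i) \<and> p i \<in> V i"
  obtains W where "diagonal_nbhd X W" "\<And>i y. i \<in> I \<Longrightarrow> (p i, y) \<in> W \<Longrightarrow> y \<in> V i"
proof
  show "diagonal_nbhd X (\<Inter>(insert (topspace X \<times> topspace X)
      ((\<lambda>i. V i \<times> V i \<union> (topspace X - {p i}) \<times> (topspace X - {p i})) ` I)))"
    using assms by (intro diagonal_nbhd_Inter diagonal_nbhd_square_union) (auto simp: closedin_t1_singleton)
qed auto

lemma finite_image_if_factors:
  assumes "finite (f ` A)" "\<And>x y. x \<in> A \<Longrightarrow> y \<in> A \<Longrightarrow> f x = f y \<Longrightarrow> g x = g y"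
  shows "finite (g ` A)"
proof -
  have "g ` A = (\<lambda>b. g (SOME x. x \<in> A \<and> f x = b)) ` f ` A"
  proof (intro equalityI subsetI)
    fix y assume "y \<in> g ` A"
    then obtain x where x: "x \<in> A" "y = g x"
      by blast
    then have "g (SOME x'. x' \<in> A \<and> f x' = f x) = y"
      using assms(2) by (metis (mono_tags, lifting) someI)
    then show "y \<in> (\<lambda>b. g (SOME x. x \<in> A \<and> f x = b)) ` f ` A"
      using x(1) by blast
  next
    fix y assume "y \<in> (\<lambda>b. g (SOME x. x \<in> A \<and> f x = b)) ` f ` A"
    then obtain x where x: "x \<in> A" "y = g (SOME x'. x' \<in> A \<and> f x' = f x)"
      by blast
    then show "y \<in> g ` A"
      by (metis (mono_tags, lifting) image_eqI someI)
  qed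
  then show ?thesis
    using assms(1) by simp
qed

context
  fixes G :: "('g, 'm) monoid_scheme" and T :: "'g topology"
    and X :: "'a topology" and act :: "'g \<Rightarrow> 'a \<Rightarrow> 'a"
  assumes tds: "tds G T X act"
begin

lemma group_G: "group G"
  using tds unfolding tds_def topological_group_def by blast

lemma compact_space_X: "compact_space X"
  using tds unfolding tds_def by blast

lemma Hausdorff_space_X: "Hausdorff_space X"
  using tds unfolding tds_def by blast

lemma act_closed: "g \<in> carrier G \<Longrightarrow> x \<in> topspace X \<Longrightarrow> act g x \<in> topspace X"
  using tds unfolding tds_def by blast

lemma act_mult:
  "g \<in> carrier G \<Longrightarrow> h \<in> carrier G \<Longrightarrow> x \<in> topspace X \<Longrightarrow> act (g \<otimes>\<^bsub>G\<^esub> h) x = act g (act h x)"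
  using tds unfolding tds_def by blast

lemma act_inv_act: "g \<in> carrier G \<Longrightarrow> x \<in> topspace X \<Longrightarrow> act (inv\<^bsub>G\<^esub> g) (act g x) = x"
  using tds act_mult[of "inv\<^bsub>G\<^esub> g" g x] group.inv_closed[OF group_G] group.l_inv[OF group_G]
  unfolding tds_def by metis

lemma equicontinuous_action_uniform:
  assumes "equicontinuous_action G X act" "diagonal_nbhd X W0"
  obtains R where "diagonal_nbhd X R"
    "\<And>a b k. (a, b) \<in> R \<Longrightarrow> k \<in> carrier G \<Longrightarrow> (act k a, act k b) \<in> W0"
proof -
  obtain W where W: "diagonal_nbhd X W" "\<And>a b c. (a, b) \<in> W \<Longrightarrow> (a, c) \<in> W \<Longrightarrow> (b, c) \<in> W0"
    using diagonal_nbhd_star_refinement[OF compact_space_X Hausdorff_space_X assms(2)] by metis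
  have "\<exists>U. openin X U \<and> c \<in> U \<and> (\<forall>y\<in>U. \<forall>g\<in>carrier G. (act g c, act g y) \<in> W)"
    if c: "c \<in> topspace X" for c
    using assms(1) W(1) c unfolding equicontinuous_action_def diagonal_nbhd_def by simp
  then obtain U where U: "\<And>c. c \<in> topspace X \<Longrightarrow>
      openin X (U c) \<and> c \<in> U c \<and> (\<forall>y\<in>U c. \<forall>g\<in>carrier G. (act g c, act g y) \<in> W)"
    by metis
  define R where "R = (\<Union>c\<in>topspace X. U c \<times> U c)"
  have "diagonal_nbhd X R"
    unfolding diagonal_nbhd_def R_def using U
    by (auto intro!: openin_Union simp: openin_prod_Times_iff)
  moreover have "(act k a, act k b) \<in> W0" if ab: "(a, b) \<in> R" and k: "k \<in> carrier G" for a b k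
  proof -
    obtain c where "c \<in> topspace X" "a \<in> U c" "b \<in> U c"
      using ab unfolding R_def by blast
    then have "(act k c, act k a) \<in> W" "(act k c, act k b) \<in> W"
      using U k by blast+
    then show ?thesis
      using W(2) by blast
  qed
  ultimately show thesis
    using that by blast
qed

lemma pinned_difference_nbhd:
  assumes "equicontinuous_action G X act" "finite I"
    and pins: "\<And>i. i \<in> I \<Longrightarrow> p i \<in> topspace X \<and> openin X (V i) \<and> p i \<in> V i"
  obtains R where "diagonal_nbhd X R"
    "\<And>h h' i. h \<in> carrier G \<Longrightarrow> h' \<in> carrier G \<Longrightarrow> i \<in> I \<Longrightarrow>
       (act h (p i), act h' (p i)) \<in> R \<Longrightarrow> act (inv\<^bsub>G\<^esub> h \<otimes>\<^bsub>G\<^esub> h') (p i) \<in> V i"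
proof -
  have "t1_space X"
    using Hausdorff_space_X Hausdorff_imp_t1_space by blast
  then obtain W0 where W0: "diagonal_nbhd X W0" "\<And>i y. i \<in> I \<Longrightarrow> (p i, y) \<in> W0 \<Longrightarrow> y \<in> V i"
    using diagonal_nbhd_pinning[OF _ assms(2), where p=p and V=V] pins by metis
  obtain R where R: "diagonal_nbhd X R"
      "\<And>a b k. (a, b) \<in> R \<Longrightarrow> k \<in> carrier G \<Longrightarrow> (act k a, act k b) \<in> W0"
    using equicontinuous_action_uniform[OF assms(1) W0(1)] by metis
  show thesis
  proof (rule that[OF R(1)])
    fix h h' i
    assume h: "h \<in> carrier G" and h': "h' \<in> carrier G" and i: "i \<in> I"
      and close: "(act h (p i), act h' (p i)) \<in> R"
    have inv_h: "inv\<^bsub>G\<^esub> h \<in> carrier G"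
      using group_G h by simp
    have "(act (inv\<^bsub>G\<^esub> h) (act h (p i)), act (inv\<^bsub>G\<^esub> h) (act h' (p i))) \<in> W0"
      using R(2)[OF close inv_h] .
    then have "(p i, act (inv\<^bsub>G\<^esub> h \<otimes>\<^bsub>G\<^esub> h') (p i)) \<in> W0"
      using act_inv_act[OF h] act_mult[OF inv_h h'] pins[OF i] by simp
    then show "act (inv\<^bsub>G\<^esub> h \<otimes>\<^bsub>G\<^esub> h') (p i) \<in> V i"
      using W0(2)[OF i] by blast
  qed
qed

lemma finite_orbit_if_pinned_fix:
  assumes "equicontinuous_action G X act" "finite I"
    and pins: "\<And>i. i \<in> I \<Longrightarrow> p i \<in> topspace X \<and> openin X (V i) \<and> p i \<in> V i"
    and \<theta>: "\<theta> \<in> topspace X"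
    and stable: "\<And>g. g \<in> carrier G \<Longrightarrow> \<forall>i\<in>I. act g (p i) \<in> V i \<Longrightarrow> act g \<theta> = \<theta>"
  shows "finite ((\<lambda>g. act g \<theta>) ` carrier G)"
proof -
  obtain R where R: "diagonal_nbhd X R"
    "\<And>h h' i. h \<in> carrier G \<Longrightarrow> h' \<in> carrier G \<Longrightarrow> i \<in> I \<Longrightarrow>
       (act h (p i), act h' (p i)) \<in> R \<Longrightarrow> act (inv\<^bsub>G\<^esub> h \<otimes>\<^bsub>G\<^esub> h') (p i) \<in> V i"
    using pinned_difference_nbhd[OF assms(1,2), where p=p and V=V, OF pins] by metis
  obtain R' where R': "diagonal_nbhd X R'" "\<And>a b c. (a, b) \<in> R' \<Longrightarrow> (a, c) \<in> R' \<Longrightarrow> (b, c) \<in> R"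
    using diagonal_nbhd_star_refinement[OF compact_space_X Hausdorff_space_X R(1)] by metis
  obtain C where C: "finite C" "\<And>y. y \<in> topspace X \<Longrightarrow> \<exists>c\<in>C. (c, y) \<in> R'"
    using diagonal_nbhd_finite_net[OF compact_space_X R'(1)] by metis
  txt \<open>\<open>cell h\<close> records a net point near each \<open>h p\<^sub>i\<close>; by the choice of \<open>R\<close>, \<open>h \<theta>\<close> depends only on it.\<close>
  define cell where "cell h = (\<lambda>i\<in>I. SOME c. c \<in> C \<and> (c, act h (p i)) \<in> R')" for h
  have cell: "cell h i \<in> C \<and> (cell h i, act h (p i)) \<in> R'" if h: "h \<in> carrier G" and i: "i \<in> I" for h i
  proof -
    have "\<exists>c. c \<in> C \<and> (c, act h (p i)) \<in> R'"
      using C(2)[OF act_closed[OF h]] pins[OF i] by blast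
    from someI_ex[OF this] show ?thesis
      unfolding cell_def using i by simp
  qed
  have "cell ` carrier G \<subseteq> PiE I (\<lambda>_. C)"
    using cell unfolding cell_def by (auto simp: PiE_iff)
  then have "finite (cell ` carrier G)"
    using finite_PiE[OF assms(2) C(1)] finite_subset by blast
  moreover have "act h \<theta> = act h' \<theta>"
    if h: "h \<in> carrier G" and h': "h' \<in> carrier G" and same: "cell h = cell h'" for h h'
  proof -
    have k: "inv\<^bsub>G\<^esub> h \<otimes>\<^bsub>G\<^esub> h' \<in> carrier G"
      using group_G h h' by (simp add: group.subgroup_self subgroup.m_closed)
    have "act (inv\<^bsub>G\<^esub> h \<otimes>\<^bsub>G\<^esub> h') (p i) \<in> V i" if i: "i \<in> I" for i
      using R(2)[OF h h' i] R'(2) cell[OF h i] cell[OF h' i] same by metis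
    then have "act (inv\<^bsub>G\<^esub> h \<otimes>\<^bsub>G\<^esub> h') \<theta> = \<theta>"
      using stable[OF k] by blast
    moreover have "h \<otimes>\<^bsub>G\<^esub> (inv\<^bsub>G\<^esub> h \<otimes>\<^bsub>G\<^esub> h') = h'"
      using group.inv_solve_left[OF group_G k h h'] by simp
    ultimately show ?thesis
      using act_mult[OF h k \<theta>] by simp
  qed
  ultimately show ?thesis
    by (rule finite_image_if_factors)
qed

lemma infinite_orbit:
  assumes "minimal_action G X act" "infinite (topspace X)" "\<theta> \<in> topspace X"
  shows "infinite ((\<lambda>g. act g \<theta>) ` carrier G)"
proof
  assume fin: "finite ((\<lambda>g. act g \<theta>) ` carrier G)"
  have "(\<lambda>g. act g \<theta>) ` carrier G \<subseteq> topspace X"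
    using act_closed assms(3) by blast
  then have "X closure_of ((\<lambda>g. act g \<theta>) ` carrier G) = (\<lambda>g. act g \<theta>) ` carrier G"
    using closedin_Hausdorff_finite[OF Hausdorff_space_X _ fin] closure_of_closedin by blast
  then have "topspace X = (\<lambda>g. act g \<theta>) ` carrier G"
    using assms(1,3) unfolding minimal_action_def by simp
  then show False
    using fin assms(2) by simp
qed

lemma exists_pinned_moving:
  assumes "equicontinuous_action G X act" "minimal_action G X act" "infinite (topspace X)"
    and "finite I" "\<And>i. i \<in> I \<Longrightarrow> p i \<in> topspace X \<and> openin X (V i) \<and> p i \<in> V i"
    and "\<theta> \<in> topspace X"
  shows "\<exists>g\<in>carrier G. (\<forall>i\<in>I. act g (p i) \<in> V i) \<and> act g \<theta> \<noteq> \<theta>"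
  using finite_orbit_if_pinned_fix[OF assms(1,4), where p=p and V=V, OF assms(5,6)]
    infinite_orbit[OF assms(2,3,6)] by blast

lemma exists_pinned_moving_both:
  assumes "equicontinuous_action G X act" "minimal_action G X act" "infinite (topspace X)"
    and "finite I" and pins: "\<And>i. i \<in> I \<Longrightarrow> p i \<in> topspace X \<and> openin X (V i) \<and> p i \<in> V i"
    and \<theta>: "\<theta> \<in> topspace X" and \<theta>': "\<theta>' \<in> topspace X"
  shows "\<exists>g\<in>carrier G. (\<forall>i\<in>I. act g (p i) \<in> V i) \<and> act g \<theta> \<noteq> \<theta> \<and> act g \<theta>' \<noteq> \<theta>'"
proof -
  obtain g where g: "g \<in> carrier G" "\<forall>i\<in>I. act g (p i) \<in> V i" "act g \<theta> \<noteq> \<theta>"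
    using exists_pinned_moving[OF assms(1-4), where p=p and V=V, OF pins \<theta>] by blast
  show ?thesis
  proof (cases "act g \<theta>' = \<theta>'")
    case False
    then show ?thesis
      using g by blast
  next
    case True
    txt \<open>Move \<open>\<theta>'\<close> by some \<open>h\<close> that keeps \<open>g \<theta>\<close> off \<open>\<theta>\<close> and each \<open>g p\<^sub>i\<close> inside \<open>V i\<close>; then \<open>h g\<close> works.\<close>
    define J where "J = insert None (Some ` I)"
    define q where "q = case_option (act g \<theta>) (\<lambda>i. act g (p i))"
    define W where "W = case_option (topspace X - {\<theta>}) V"
    have "finite J"
      unfolding J_def using assms(4) by simp
    moreover have pins': "q j \<in> topspace X \<and> openin X (W j) \<and> q j \<in> W j" if j: "j \<in> J" for j
    proof (cases j)
      case None
      have "closedin X {\<theta>}"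
        using closedin_t1_singleton[OF Hausdorff_imp_t1_space[OF Hausdorff_space_X] \<theta>] .
      then have "openin X (topspace X - {\<theta>})"
        by (simp add: openin_diff)
      then show ?thesis
        unfolding None q_def W_def using act_closed[OF g(1) \<theta>] g(3) by simp
    next
      case (Some i)
      then have "i \<in> I"
        using j unfolding J_def by blast
      then show ?thesis
        unfolding Some q_def W_def using pins g(2) act_closed[OF g(1)] by simp
    qed
    ultimately obtain h where h: "h \<in> carrier G" "\<forall>j\<in>J. act h (q j) \<in> W j" "act h \<theta>' \<noteq> \<theta>'"
      using exists_pinned_moving[OF assms(1-3) \<open>finite J\<close>, where p=q and V=W, OF pins' \<theta>'] by blast
    have hg: "h \<otimes>\<^bsub>G\<^esub> g \<in> carrier G"
      using group_G h(1) g(1) by (simp add: group.subgroup_self subgroup.m_closed)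
    have "act (h \<otimes>\<^bsub>G\<^esub> g) (p i) \<in> V i" if "i \<in> I" for i
      using h(2) that pins act_mult[OF h(1) g(1)] unfolding J_def q_def W_def by auto
    moreover have "act (h \<otimes>\<^bsub>G\<^esub> g) \<theta> \<noteq> \<theta>"
      using h(2) act_mult[OF h(1) g(1) \<theta>] unfolding J_def q_def W_def by auto
    moreover have "act (h \<otimes>\<^bsub>G\<^esub> g) \<theta>' \<noteq> \<theta>'"
      using h(3) True act_mult[OF h(1) g(1) \<theta>'] by simp
    ultimately show ?thesis
      using hg by blast
  qed
qed

lemma act_map_in_ellis_semigroup:
  assumes "g \<in> carrier G"
  shows "act_map act X g \<in> ellis_semigroup G X act"
proof -
  have "act_map act X ` carrier G \<subseteq> topspace (pointwise_top X)"
    using act_closed unfolding act_map_def pointwise_top_def by auto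
  then show ?thesis
    unfolding ellis_semigroup_def using closure_of_subset assms by blast
qed

lemma ellis_unit_nbhd_pinned:
  assumes "neighbourhood_in (ellis_top G X act) N (ellis_unit X)"
  obtains I V where "finite I" "\<And>i. i \<in> I \<Longrightarrow> i \<in> topspace X \<and> openin X (V i) \<and> i \<in> V i"
    "\<And>g. g \<in> carrier G \<Longrightarrow> \<forall>i\<in>I. act g i \<in> V i \<Longrightarrow> act_map act X g \<in> N"
proof -
  obtain U where U: "openin (ellis_top G X act) U" "ellis_unit X \<in> U" "U \<subseteq> N"
    using assms unfolding neighbourhood_in_def by blast
  obtain U0 where U0: "openin (pointwise_top X) U0" "U = U0 \<inter> ellis_semigroup G X act"
    using U(1) unfolding ellis_top_def openin_subtopology by blast
  obtain V where V: "ellis_unit X \<in> (\<Pi>\<^sub>E i\<in>topspace X. V i)" "\<forall>i. openin X (V i)"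
      "finite {i. V i \<noteq> topspace X}" "(\<Pi>\<^sub>E i\<in>topspace X. V i) \<subseteq> U0"
    using product_topology_open_contains_basis[OF U0(1)[unfolded pointwise_top_def]] U(2) U0(2)
    by (metis IntD1)
  define I where "I = {i \<in> topspace X. V i \<noteq> topspace X}"
  show thesis
  proof (rule that)
    show "finite I"
      using V(3) unfolding I_def by (simp add: Collect_conj_eq)
    show "i \<in> topspace X \<and> openin X (V i) \<and> i \<in> V i" if "i \<in> I" for i
      using V(1,2) that unfolding I_def ellis_unit_def by auto
    fix g assume g: "g \<in> carrier G" and pinned: "\<forall>i\<in>I. act g i \<in> V i"
    have "act_map act X g \<in> (\<Pi>\<^sub>E i\<in>topspace X. V i)"
      using pinned act_closed[OF g] unfolding act_map_def I_def by auto
    then show "act_map act X g \<in> N"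
      using act_map_in_ellis_semigroup[OF g] U(3) U0(2) V(4) by blast
  qed
qed

end

theorem mainTheorem3:
  fixes G :: "('g, 'm) monoid_scheme" and T :: "'g topology"
    and X :: "'a topology" and act :: "'g \<Rightarrow> 'a \<Rightarrow> 'a"
    and \<theta> \<theta>' :: 'a and N :: "('a \<Rightarrow> 'a) set"
  assumes "tds G T X act"
    and "minimal_action G X act"
    and "equicontinuous_action G X act"
    and "infinite (topspace X)"
    and "\<theta> \<in> topspace X" and "\<theta>' \<in> topspace X"
    and "neighbourhood_in (ellis_top G X act) N (ellis_unit X)"
  shows "\<exists>g\<in>carrier G. act_map act X g \<in> N \<and> act g \<theta> \<noteq> \<theta> \<and> act g \<theta>' \<noteq> \<theta>'"
proof -
  obtain I V where I: "finite I" "\<And>i. i \<in> I \<Longrightarrow> i \<in> topspace X \<and> openin X (V i) \<and> i \<in> V i"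
    and N: "\<And>g. g \<in> carrier G \<Longrightarrow> \<forall>i\<in>I. act g i \<in> V i \<Longrightarrow> act_map act X g \<in> N"
    using ellis_unit_nbhd_pinned[OF assms(1,7)] by metis
  obtain g where "g \<in> carrier G" "\<forall>i\<in>I. act g i \<in> V i" "act g \<theta> \<noteq> \<theta>" "act g \<theta>' \<noteq> \<theta>'"
    using exists_pinned_moving_both[OF assms(1,3,2,4) I(1), where p="\<lambda>i. i" and V=V, OF I(2) assms(5,6)]
    by blast
  then show ?thesis
    using N by blast
qed

end
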